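(* Let $(S,Z,A,\tilde Y)$ be jointly distributed random variables, where $S$ is a state distributed according to $d_\pi$, $Z\in\{1,\dots,N\}$ is a sampling index, $A$ takes values in a finite action set, and $\tilde Y\in\{1,\dots,B\}$ is a discretized reward signal. For each state $s$ put $\pi_i^s(a):=P(A=a\mid Z=i,S=s)$, $w_i(s):=P(Z=i\mid S=s)$ and $\bar\pi^s(a):=\sum_{i=1}^Nw_i(s)\pi_i^s(a)=P(A=a\mid S=s)$. Consider the three divergences $$\mathrm{JSD}_{w(s)}(\{\pi_i^s\}):=\sum_iw_i(s)D_{KL}(\pi_i^s\,\|\,\bar\pi^s),\quad D_2(Z\mid s):=\sum_iw_i(s)\|\pi_i^s-\bar\pi^s\|_2^2,\quad D_{TV}(Z\mid s):=\sum_iw_i(s)\,TV(\pi_i^s,\bar\pi^s)^2,$$ and for each of them define $\mathrm{Expr}:=\mathbb{E}_{S\sim d_\pi}[\text{Divergence}]$. If $I(A;Z\mid\tilde Y,S)=0$, then for each of these three divergences $$\mathrm{Expr}\le O\big(I(A;\tilde Y\mid S)\big),$$ i.e. there is an absolute constant $C$ (not depending on the distributions) with $\mathrm{Expr}\le C\,I(A;\tilde Y\mid S)$.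
   Context: $TV(p,q)=\frac12\sum_a|p(a)-q(a)|$ is total variation distance; $D_{KL}$ is Kullback–Leibler divergence and mutual informations use the natural logarithm. $I(A;\tilde Y\mid S)=\mathbb{E}_{s\sim d_\pi}[I(A;\tilde Y\mid S=s)]$ (called MI-TET), where $d_\pi$ is the state distribution visited by the policy. $Z$ indexes the latest $N$ samplings of the policy, so $\mathrm{Expr}$ measures the spread among sampled action distributions. *)

theory Defs
  imports "HOL-Probability.Probability"
begin

type_synonym sample = "nat \<times> nat \<times> nat \<times> nat"

definition sS :: "sample \<Rightarrow> nat" where "sS x = fst x"
definition zZ :: "sample \<Rightarrow> nat" where "zZ x = fst (snd x)"
definition aA :: "sample \<Rightarrow> nat" where "aA x = fst (snd (snd x))"
definition yY :: "sample \<Rightarrow> nat" where "yY x = snd (snd (snd x))"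

definition mutual_info :: "('u \<times> 'v) pmf \<Rightarrow> real" where
  "mutual_info Q = (\<Sum>(u, v)\<in>set_pmf Q.
      pmf Q (u, v) * ln (pmf Q (u, v) / (pmf (map_pmf fst Q) u * pmf (map_pmf snd Q) v)))"

definition mi_A_Y_given_S :: "sample pmf \<Rightarrow> real" where
  "mi_A_Y_given_S P = measure_pmf.expectation (map_pmf sS P)
     (\<lambda>s. mutual_info (map_pmf (\<lambda>x. (aA x, yY x)) (cond_pmf P {x. sS x = s})))"

definition mi_A_Z_given_YS :: "sample pmf \<Rightarrow> real" where
  "mi_A_Z_given_YS P = measure_pmf.expectation (map_pmf (\<lambda>x. (sS x, yY x)) P)
     (\<lambda>(s, y). mutual_info (map_pmf (\<lambda>x. (aA x, zZ x)) (cond_pmf P {x. sS x = s \<and> yY x = y})))"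

definition wt :: "sample pmf \<Rightarrow> nat \<Rightarrow> nat \<Rightarrow> real" where
  "wt P s i = pmf (map_pmf zZ (cond_pmf P {x. sS x = s})) i"

definition pol :: "sample pmf \<Rightarrow> nat \<Rightarrow> nat \<Rightarrow> nat \<Rightarrow> real" where
  "pol P s i a = pmf (map_pmf aA (cond_pmf P {x. sS x = s \<and> zZ x = i})) a"

definition mixpol :: "sample pmf \<Rightarrow> nat \<Rightarrow> nat \<Rightarrow> nat \<Rightarrow> real" where
  "mixpol P N s a = (\<Sum>i\<in>{1..N}. wt P s i * pol P s i a)"

definition kl_on :: "'a set \<Rightarrow> ('a \<Rightarrow> real) \<Rightarrow> ('a \<Rightarrow> real) \<Rightarrow> real" where
  "kl_on X p q = (\<Sum>a\<in>X. p a * ln (p a / q a))"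

definition tv_on :: "'a set \<Rightarrow> ('a \<Rightarrow> real) \<Rightarrow> ('a \<Rightarrow> real) \<Rightarrow> real" where
  "tv_on X p q = (1 / 2) * (\<Sum>a\<in>X. \<bar>p a - q a\<bar>)"

definition JSD_div :: "sample pmf \<Rightarrow> nat \<Rightarrow> nat set \<Rightarrow> nat \<Rightarrow> real" where
  "JSD_div P N X s = (\<Sum>i\<in>{1..N}. wt P s i * kl_on X (pol P s i) (mixpol P N s))"

definition D2_div :: "sample pmf \<Rightarrow> nat \<Rightarrow> nat set \<Rightarrow> nat \<Rightarrow> real" where
  "D2_div P N X s = (\<Sum>i\<in>{1..N}. wt P s i * (\<Sum>a\<in>X. (pol P s i a - mixpol P N s a)\<^sup>2))"

definition DTV_div :: "sample pmf \<Rightarrow> nat \<Rightarrow> nat set \<Rightarrow> nat \<Rightarrow> real" where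
  "DTV_div P N X s = (\<Sum>i\<in>{1..N}. wt P s i * (tv_on X (pol P s i) (mixpol P N s))\<^sup>2)"

definition Expr :: "sample pmf \<Rightarrow> (nat \<Rightarrow> real) \<Rightarrow> real" where
  "Expr P D = measure_pmf.expectation (map_pmf sS P) D"

end

theory Submission
  imports Defs
begin

text \<open>At a fixed state the Jensen-Shannon term is the mutual information \<open>I(A; Z | S = s)\<close>. The
  chain rule bounds it by \<open>I(A; Y | S = s) + I(A; Z | Y, S = s)\<close>, and the hypothesis makes the last
  term vanish at every \<open>(s, y)\<close> of positive probability. Pointwise, \<open>TV\<^sup>2 \<le> KL\<close> (through the
  Hellinger distance) and the squared Euclidean distance is at most \<open>4 TV\<^sup>2\<close>, so all three
  divergences are at most \<open>4 I(A; Y | S = s)\<close>; taking expectations over \<open>S\<close> gives \<open>C = 4\<close>.\<close>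

lemma diff_le_mul_ln:
  fixes p q :: real
  assumes "0 \<le> p" "0 \<le> q" "q = 0 \<Longrightarrow> p = 0"
  shows "p - q \<le> p * ln (p / q)"
proof (cases "p = 0")
  case False
  with assms have "q \<noteq> 0" by blast
  with False assms have "0 < p" "0 < q" by auto
  then have "p * (1 - q / p) \<le> p * ln (p / q)"
    using ln_le_minus_one[of "q / p"] by (intro mult_left_mono) (simp_all add: ln_div)
  moreover have "p * (1 - q / p) = p - q" using \<open>0 < p\<close> by (simp add: field_simps)
  ultimately show ?thesis by simp
qed (use assms in simp)

lemma two_mul_sub_sqrt_le_mul_ln:
  fixes p q :: real
  assumes "0 \<le> p" "0 \<le> q" "q = 0 \<Longrightarrow> p = 0"
  shows "2 * p - 2 * sqrt p * sqrt q \<le> p * ln (p / q)"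
proof (cases "p = 0")
  case False
  with assms have "q \<noteq> 0" by blast
  with False assms have pos: "0 < sqrt p" "0 < sqrt q" by auto
  have "2 * p - 2 * sqrt p * sqrt q = - 2 * (p * (sqrt q / sqrt p - 1))"
    using pos assms by (simp add: field_simps flip: power2_eq_square)
  also have "\<dots> \<le> - 2 * (p * ln (sqrt q / sqrt p))"
    using pos assms(1) by (simp add: mult_left_mono ln_le_minus_one)
  also have "\<dots> = p * ln (p / q)"
    using pos assms by (simp add: ln_div ln_sqrt right_diff_distrib)
  finally show ?thesis .
qed simp

lemma mul_ln_ratio_le_split:
  fixes f zA z a c ay y zy :: real
  assumes "0 < f" "0 < zA" "0 < z" "0 < a" "0 < c" "0 < ay" "0 < y" "0 < zy"
  shows "f / c * ln (zA * c / (z * a))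
    \<le> f / c * ln (ay * c / (a * y)) + f / c * ln (f * y / (ay * zy)) + (zy * zA / z - f) / c"
proof -
  define t where "t = zy * zA / (z * f)"
  have pos: "0 < ay * c / (a * y)" "0 < f * y / (ay * zy)" "0 < t"
    using assms by (simp_all add: t_def)
  have "zA * c / (z * a) = ay * c / (a * y) * (f * y / (ay * zy)) * t"
    using assms by (simp add: t_def field_simps)
  then have "ln (zA * c / (z * a)) = ln (ay * c / (a * y)) + ln (f * y / (ay * zy)) + ln t"
    using pos by (simp only: ln_mult_pos mult_pos_pos)
  moreover have "f / c * ln t \<le> f / c * (t - 1)"
    using pos assms by (intro mult_left_mono ln_le_minus_one) simp_all
  moreover have "f / c * (t - 1) = (zy * zA / z - f) / c"
    using assms by (simp add: t_def field_simps)
  ultimately show ?thesis by (simp only: distrib_left)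
qed

lemma kl_on_nonneg:
  assumes "\<And>a. a \<in> X \<Longrightarrow> 0 \<le> p a" "\<And>a. a \<in> X \<Longrightarrow> 0 \<le> q a"
    and "sum p X = 1" "sum q X \<le> 1" and "\<And>a. a \<in> X \<Longrightarrow> q a = 0 \<Longrightarrow> p a = 0"
  shows "0 \<le> kl_on X p q"
proof -
  have "0 \<le> (\<Sum>a\<in>X. p a - q a)" using assms(3,4) by (simp add: sum_subtractf)
  also have "\<dots> \<le> kl_on X p q"
    unfolding kl_on_def using assms by (intro sum_mono diff_le_mul_ln) auto
  finally show ?thesis .
qed

lemma hellinger_le_kl_on:
  assumes "\<And>a. a \<in> X \<Longrightarrow> 0 \<le> p a" "\<And>a. a \<in> X \<Longrightarrow> 0 \<le> q a"
    and "sum p X = 1" "sum q X = 1" and "\<And>a. a \<in> X \<Longrightarrow> q a = 0 \<Longrightarrow> p a = 0"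
  shows "(\<Sum>a\<in>X. (sqrt (p a) - sqrt (q a))\<^sup>2) \<le> kl_on X p q"
proof -
  have "(\<Sum>a\<in>X. (sqrt (p a) - sqrt (q a))\<^sup>2) = (\<Sum>a\<in>X. p a + q a - 2 * sqrt (p a) * sqrt (q a))"
    using assms(1,2) by (intro sum.cong) (auto simp: power2_diff)
  also have "\<dots> = (\<Sum>a\<in>X. 2 * p a - 2 * sqrt (p a) * sqrt (q a))"
    using assms(3,4) by (simp add: sum.distrib sum_subtractf flip: sum_distrib_left)
  also have "\<dots> \<le> kl_on X p q"
    unfolding kl_on_def using assms by (intro sum_mono two_mul_sub_sqrt_le_mul_ln) auto
  finally show ?thesis .
qed

lemma sq_sqrt_add_le:
  fixes x y :: real
  assumes "0 \<le> x" "0 \<le> y"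
  shows "(sqrt x + sqrt y)\<^sup>2 \<le> 2 * (x + y)"
proof -
  have "(sqrt x + sqrt y)\<^sup>2 + (sqrt x - sqrt y)\<^sup>2 = 2 * (x + y)"
    using assms by (simp add: power2_sum power2_diff)
  then show ?thesis using zero_le_power2[of "sqrt x - sqrt y"] by linarith
qed

text \<open>Pinsker's inequality with constant 1 instead of 1/2, via the Hellinger distance and
  Cauchy-Schwarz: \<open>(\<Sum>|p - q|)\<^sup>2 \<le> \<Sum>(\<surd>p - \<surd>q)\<^sup>2 * \<Sum>(\<surd>p + \<surd>q)\<^sup>2 \<le> 4 * kl\<close>.\<close>
lemma tv_on_sq_le_kl_on:
  assumes "\<And>a. a \<in> X \<Longrightarrow> 0 \<le> p a" "\<And>a. a \<in> X \<Longrightarrow> 0 \<le> q a"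
    and "sum p X = 1" "sum q X = 1" and "\<And>a. a \<in> X \<Longrightarrow> q a = 0 \<Longrightarrow> p a = 0"
  shows "(tv_on X p q)\<^sup>2 \<le> kl_on X p q"
proof -
  let ?d = "\<lambda>a. sqrt (p a) - sqrt (q a)" and ?s = "\<lambda>a. sqrt (p a) + sqrt (q a)"
  have "\<bar>p a - q a\<bar> = \<bar>?d a\<bar> * ?s a" if "a \<in> X" for a
  proof -
    have "p a - q a = ?d a * ?s a"
      using assms(1,2)[OF that] by (simp add: algebra_simps flip: power2_eq_square)
    moreover have "0 \<le> ?s a" using assms(1,2)[OF that] by simp
    ultimately show ?thesis by (simp only: abs_mult abs_of_nonneg)
  qed
  then have "(2 * tv_on X p q)\<^sup>2 = (\<Sum>a\<in>X. \<bar>?d a\<bar> * ?s a)\<^sup>2"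
    unfolding tv_on_def by (simp cong: sum.cong)
  also have "\<dots> \<le> (\<Sum>a\<in>X. (?d a)\<^sup>2) * (\<Sum>a\<in>X. (?s a)\<^sup>2)"
    using Cauchy_Schwarz_ineq_sum[of "\<lambda>a. \<bar>?d a\<bar>" ?s X] by simp
  also have "\<dots> \<le> kl_on X p q * 4"
  proof (rule mult_mono)
    show "(\<Sum>a\<in>X. (?d a)\<^sup>2) \<le> kl_on X p q"
      by (rule hellinger_le_kl_on[OF assms])
    then show "0 \<le> kl_on X p q"
      using sum_nonneg[of X "\<lambda>a. (?d a)\<^sup>2"] by simp
    have "(\<Sum>a\<in>X. (?s a)\<^sup>2) \<le> (\<Sum>a\<in>X. 2 * (p a + q a))"
      using assms(1,2) by (intro sum_mono sq_sqrt_add_le)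
    then show "(\<Sum>a\<in>X. (?s a)\<^sup>2) \<le> 4"
      using assms(3,4) by (simp add: sum.distrib flip: sum_distrib_left)
  qed (simp add: sum_nonneg)
  finally show ?thesis by simp
qed

lemma sum_sq_le_four_tv_on_sq:
  assumes "finite X"
  shows "(\<Sum>a\<in>X. (p a - q a)\<^sup>2) \<le> 4 * (tv_on X p q)\<^sup>2"
proof -
  let ?S = "\<Sum>a\<in>X. \<bar>p a - q a\<bar>"
  have "(\<Sum>a\<in>X. (p a - q a)\<^sup>2) = (\<Sum>a\<in>X. \<bar>p a - q a\<bar> * \<bar>p a - q a\<bar>)"
    by (simp add: power2_eq_square)
  also have "\<dots> \<le> (\<Sum>a\<in>X. \<bar>p a - q a\<bar> * ?S)"
    using assms by (intro sum_mono mult_left_mono member_le_sum) auto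
  also have "\<dots> = 4 * (tv_on X p q)\<^sup>2"
    by (simp add: tv_on_def power2_eq_square sum_distrib_right)
  finally show ?thesis .
qed

lemma mixture_tv_on_sq_le_kl_on:
  fixes I :: "'i set" and w :: "'i \<Rightarrow> real" and p :: "'i \<Rightarrow> 'a \<Rightarrow> real"
  defines "q \<equiv> \<lambda>a. \<Sum>j\<in>I. w j * p j a"
  assumes w: "\<And>j. j \<in> I \<Longrightarrow> 0 \<le> w j" "sum w I = 1"
    and p: "\<And>j a. j \<in> I \<Longrightarrow> a \<in> X \<Longrightarrow> 0 \<le> p j a"
      "\<And>j. j \<in> I \<Longrightarrow> w j \<noteq> 0 \<Longrightarrow> sum (p j) X = 1"
    and i: "i \<in> I"
  shows "w i * (tv_on X (p i) q)\<^sup>2 \<le> w i * kl_on X (p i) q"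
proof (cases "w i = 0")
  case False
  have fin: "finite I" using w(2) by (metis sum.infinite zero_neq_one)
  have "sum q X = (\<Sum>j\<in>I. w j * sum (p j) X)"
    unfolding q_def by (simp add: sum.swap[of _ X] sum_distrib_left)
  also have "\<dots> = sum w I"
    using p(2) by (intro sum.cong) auto
  finally have "sum q X = 1" using w(2) by simp
  moreover have "p i a = 0" if "a \<in> X" "q a = 0" for a
  proof -
    have "w i * p i a \<le> q a"
      unfolding q_def using fin i w(1) p(1) that(1)
      by (intro member_le_sum[where f = "\<lambda>j. w j * p j a"]) auto
    then show ?thesis using that False w(1)[OF i] p(1)[OF i that(1)]
      by (simp add: mult_le_0_iff)
  qed
  ultimately have "(tv_on X (p i) q)\<^sup>2 \<le> kl_on X (p i) q"
    using i False w(1) p unfolding q_def by (intro tv_on_sq_le_kl_on sum_nonneg mult_nonneg_nonneg) auto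
  then show ?thesis using w(1)[OF i] by (rule mult_left_mono)
qed simp

lemma measure_pmf_eq_sum_injective:
  assumes "finite I" "inj_on g I" "g ` I \<subseteq> A" "A \<inter> set_pmf P \<subseteq> g ` I"
  shows "measure P A = (\<Sum>i\<in>I. pmf P (g i))"
proof -
  have "measure P A = measure P (g ` I)"
    by (rule measure_prob_cong_0) (use assms in \<open>auto simp: set_pmf_eq\<close>)
  also have "\<dots> = (\<Sum>i\<in>I. pmf P (g i))"
    using assms by (simp add: measure_measure_pmf_finite sum.reindex)
  finally show ?thesis .
qed

lemma measure_cond_pmf:
  assumes "set_pmf P \<inter> E \<noteq> {}"
  shows "measure (cond_pmf P E) A = measure P (E \<inter> A) / measure P E"
  using assms by (simp add: cond_pmf.rep_eq emeasure_measure_pmf_not_zero)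

lemma pmf_map_cond_pmf:
  fixes P :: "'a pmf"
  assumes "measure P E \<noteq> 0"
  shows "pmf (map_pmf g (cond_pmf P E)) v = measure P {x \<in> E. g x = v} / measure P E"
proof -
  have "E \<inter> g -` {v} = {x \<in> E. g x = v}" by auto
  moreover have "set_pmf P \<inter> E \<noteq> {}" using assms by (simp add: measure_pmf_zero_iff)
  ultimately show ?thesis by (simp add: pmf_map measure_cond_pmf)
qed

lemma pmf_le_pmf_map: "pmf Q x \<le> pmf (map_pmf f Q) (f x)"
proof -
  have "measure Q {x} \<le> measure Q (f -` {f x})"
    by (rule measure_pmf.finite_measure_mono) auto
  then show ?thesis by (simp add: measure_pmf_single pmf_map)
qed

lemma pmf_map_fst_eq_sum:
  assumes "finite V" "set_pmf Q \<subseteq> U \<times> V"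
  shows "pmf (map_pmf fst Q) u = (\<Sum>v\<in>V. pmf Q (u, v))"
  unfolding pmf_map
  by (rule measure_pmf_eq_sum_injective) (use assms in \<open>auto simp: inj_on_def\<close>)

lemma pmf_map_snd_eq_sum:
  assumes "finite U" "set_pmf Q \<subseteq> U \<times> V"
  shows "pmf (map_pmf snd Q) v = (\<Sum>u\<in>U. pmf Q (u, v))"
  unfolding pmf_map
  by (rule measure_pmf_eq_sum_injective) (use assms in \<open>auto simp: inj_on_def\<close>)

lemma integrable_measure_pmf_bounded:
  fixes f :: "'a \<Rightarrow> real"
  assumes "\<And>x. x \<in> set_pmf M \<Longrightarrow> \<bar>f x\<bar> \<le> K"
  shows "integrable (measure_pmf M) f"
proof (rule measure_pmf.integrable_const_bound[where B = K])
  show "AE x in measure_pmf M. norm (f x) \<le> K" using assms by (simp add: AE_measure_pmf_iff)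
qed simp

lemma expectation_pmf_eq_0_imp_eq_0:
  fixes f :: "'a \<Rightarrow> real"
  assumes "measure_pmf.expectation M f = 0" and "\<And>x. x \<in> set_pmf M \<Longrightarrow> 0 \<le> f x \<and> f x \<le> K"
    and "x \<in> set_pmf M"
  shows "f x = 0"
proof -
  have "\<bar>f x\<bar> \<le> K" if "x \<in> set_pmf M" for x
    using assms(2)[OF that] by (simp add: abs_le_iff)
  then have "integrable (measure_pmf M) f" by (rule integrable_measure_pmf_bounded)
  moreover have "AE x in measure_pmf M. 0 \<le> f x"
    using assms(2) by (simp add: AE_measure_pmf_iff)
  ultimately have "AE x in measure_pmf M. f x = 0"
    using assms(1) integral_nonneg_eq_0_iff_AE by blast
  then show ?thesis using assms(3) by (simp add: AE_measure_pmf_iff)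
qed

lemma expectation_pmf_mono_bounded:
  fixes f g :: "'a \<Rightarrow> real"
  assumes "\<And>x. x \<in> set_pmf M \<Longrightarrow> 0 \<le> f x \<and> f x \<le> g x \<and> g x \<le> K"
  shows "measure_pmf.expectation M f \<le> measure_pmf.expectation M g"
proof (rule integral_mono_AE)
  have f_bound: "\<bar>f x\<bar> \<le> K" and g_bound: "\<bar>g x\<bar> \<le> K" if "x \<in> set_pmf M" for x
    using assms[OF that] by (simp_all add: abs_le_iff)
  show "integrable (measure_pmf M) f" using f_bound by (rule integrable_measure_pmf_bounded)
  show "integrable (measure_pmf M) g" using g_bound by (rule integrable_measure_pmf_bounded)
  show "AE x in measure_pmf M. f x \<le> g x"
    using assms by (simp add: AE_measure_pmf_iff)
qed

lemma mutual_info_nonneg: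
  assumes "finite (set_pmf Q)"
  shows "0 \<le> mutual_info Q"
proof -
  let ?q = "\<lambda>(u, v). pmf (map_pmf fst Q) u * pmf (map_pmf snd Q) v"
  let ?U = "fst ` set_pmf Q" and ?V = "snd ` set_pmf Q"
  have "sum ?q (set_pmf Q) \<le> sum ?q (?U \<times> ?V)"
    using assms by (intro sum_mono2) force+
  also have "\<dots> = (\<Sum>u\<in>?U. pmf (map_pmf fst Q) u) * (\<Sum>v\<in>?V. pmf (map_pmf snd Q) v)"
    by (simp add: sum_product sum.cartesian_product)
  also have "\<dots> = 1" using assms by (simp add: sum_pmf_eq_1)
  finally have "sum ?q (set_pmf Q) \<le> 1" .
  moreover have "pmf Q x = 0" if "?q x = 0" for x
    using that pmf_le_pmf_map[of Q x fst] pmf_le_pmf_map[of Q x snd]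
    by (cases x) (auto simp: mult_eq_0_iff intro: antisym)
  ultimately have "0 \<le> kl_on (set_pmf Q) (pmf Q) ?q"
    using assms by (intro kl_on_nonneg) (auto simp: sum_pmf_eq_1)
  then show ?thesis by (simp add: kl_on_def mutual_info_def case_prod_beta)
qed

lemma mutual_info_le_card:
  assumes "finite S" "set_pmf Q \<subseteq> S"
  shows "mutual_info Q \<le> card S"
proof -
  have "pmf Q (u, v) * ln (pmf Q (u, v) / (pmf (map_pmf fst Q) u * pmf (map_pmf snd Q) v)) \<le> 1"
    if "(u, v) \<in> set_pmf Q" for u v
  proof -
    let ?p = "pmf Q (u, v)" and ?q = "pmf (map_pmf fst Q) u * pmf (map_pmf snd Q) v"
    have "?p \<le> pmf (map_pmf fst Q) u" "?p \<le> pmf (map_pmf snd Q) v"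
      using pmf_le_pmf_map[of Q "(u, v)" fst] pmf_le_pmf_map[of Q "(u, v)" snd] by simp_all
    moreover have "0 < ?p" using that by (simp add: pmf_positive)
    ultimately have "?p * ?p \<le> ?q" "0 < ?q" by (auto intro: mult_mono order.strict_trans2)
    have "?p * ln (?p / ?q) \<le> ?p * (?p / ?q)"
      using ln_le_minus_one[of "?p / ?q"] \<open>0 < ?p\<close> \<open>0 < ?q\<close> by (intro mult_left_mono) simp_all
    also have "\<dots> \<le> 1" using \<open>?p * ?p \<le> ?q\<close> \<open>0 < ?q\<close> by (simp add: pos_divide_le_eq)
    finally show ?thesis .
  qed
  then have "mutual_info Q \<le> real (card (set_pmf Q)) * 1"
    unfolding mutual_info_def by (intro sum_bounded_above) auto
  also have "\<dots> \<le> card S" using assms by (simp add: card_mono)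
  finally show ?thesis .
qed

text \<open>Mutual information of the distribution on \<open>U \<times> V\<close> proportional to the weights \<open>g\<close>.\<close>
definition mutual_info_on :: "'u set \<Rightarrow> 'v set \<Rightarrow> ('u \<Rightarrow> 'v \<Rightarrow> real) \<Rightarrow> real" where
  "mutual_info_on U V g =
     (let c = \<Sum>u\<in>U. \<Sum>v\<in>V. g u v
      in \<Sum>u\<in>U. \<Sum>v\<in>V. g u v / c * ln (g u v * c / ((\<Sum>v'\<in>V. g u v') * (\<Sum>u'\<in>U. g u' v))))"

lemma mutual_info_on_eq_margins:
  assumes "\<And>u. u \<in> U \<Longrightarrow> (\<Sum>v\<in>V. g u v) = gU u" "\<And>v. v \<in> V \<Longrightarrow> (\<Sum>u\<in>U. g u v) = gV v"
    and "sum gU U = c"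
  shows "mutual_info_on U V g = (\<Sum>u\<in>U. \<Sum>v\<in>V. g u v / c * ln (g u v * c / (gU u * gV v)))"
proof -
  have "(\<Sum>u\<in>U. \<Sum>v\<in>V. g u v) = c" using assms(1,3) by simp
  then show ?thesis unfolding mutual_info_on_def Let_def using assms(1,2) by simp
qed

lemma mutual_info_on_divide:
  assumes "0 < k"
  shows "mutual_info_on U V (\<lambda>u v. g u v / k) = mutual_info_on U V g"
proof -
  have scale: "x / k / (c / k) * ln (x / k * (c / k) / (y / k * (z / k)))
      = x / c * ln (x * c / (y * z))" for x c y z :: real
    using assms by (simp add: field_simps)
  show ?thesis
    unfolding mutual_info_on_def Let_def by (simp only: sum_divide_distrib[symmetric] scale)
qed

lemma mutual_info_eq_mutual_info_on:
  assumes "finite U" "finite V" "set_pmf Q \<subseteq> U \<times> V"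
  shows "mutual_info Q = mutual_info_on U V (\<lambda>u v. pmf Q (u, v))"
proof -
  have "(\<Sum>u\<in>U. \<Sum>v\<in>V. pmf Q (u, v)) = 1"
    using sum_pmf_eq_1[of "U \<times> V" Q] assms by (simp add: sum.cartesian_product)
  moreover have "mutual_info Q = (\<Sum>(u, v)\<in>U \<times> V.
      pmf Q (u, v) * ln (pmf Q (u, v) / (pmf (map_pmf fst Q) u * pmf (map_pmf snd Q) v)))"
    unfolding mutual_info_def
    by (rule sum.mono_neutral_left) (use assms in \<open>auto simp: set_pmf_eq\<close>)
  ultimately show ?thesis
    using assms by (simp add: mutual_info_on_def pmf_map_fst_eq_sum pmf_map_snd_eq_sum
        sum.cartesian_product)
qed

lemma sum_sum_mult_divide_eq:
  fixes u v :: "_ \<Rightarrow> real"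
  assumes "sum u A = m" "sum v B = m"
  shows "(\<Sum>a\<in>A. \<Sum>b\<in>B. v b * u a / m) = m"
proof -
  have "(\<Sum>a\<in>A. \<Sum>b\<in>B. v b * u a / m) = sum v B * sum u A / m"
    by (simp add: sum_product sum_divide_distrib mult.commute)
  then show ?thesis using assms by simp
qed

text \<open>An unnormalised joint distribution of \<open>(Z, A, Y)\<close> and its marginals.\<close>
locale joint_weights =
  fixes Zs :: "'z set" and As :: "'a set" and Ys :: "'y set" and f :: "'z \<Rightarrow> 'a \<Rightarrow> 'y \<Rightarrow> real"
  assumes finite_Zs: "finite Zs" and finite_As: "finite As" and finite_Ys: "finite Ys"
    and nonneg: "0 \<le> f z a y"
begin

definition "wZA z a = (\<Sum>y\<in>Ys. f z a y)"
definition "wAY a y = (\<Sum>z\<in>Zs. f z a y)"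
definition "wZY z y = (\<Sum>a\<in>As. f z a y)"
definition "wZ z = (\<Sum>a\<in>As. \<Sum>y\<in>Ys. f z a y)"
definition "wA a = (\<Sum>z\<in>Zs. \<Sum>y\<in>Ys. f z a y)"
definition "wY y = (\<Sum>z\<in>Zs. \<Sum>a\<in>As. f z a y)"
definition "total_weight = (\<Sum>z\<in>Zs. \<Sum>a\<in>As. \<Sum>y\<in>Ys. f z a y)"

lemma margins_nonneg: "0 \<le> wZA z a" "0 \<le> wZY z y" "0 \<le> wZ z" "0 \<le> total_weight"
  by (unfold wZA_def wZY_def wZ_def total_weight_def) (intro sum_nonneg nonneg)+

lemma le_margins:
  assumes "z \<in> Zs" "a \<in> As" "y \<in> Ys"
  shows "f z a y \<le> wZA z a" "wZA z a \<le> wZ z" "wZ z \<le> total_weight" "wZA z a \<le> wA a"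
    and "f z a y \<le> wAY a y" "f z a y \<le> wZY z y" "wZY z y \<le> wY y"
  unfolding wZA_def wZ_def total_weight_def wA_def wAY_def wZY_def wY_def
  using assms finite_Zs finite_As finite_Ys nonneg by (intro member_le_sum sum_nonneg; simp)+

lemma sum_swap_AYZ:
  "(\<Sum>z\<in>Zs. \<Sum>a\<in>As. \<Sum>y\<in>Ys. g z a y) = (\<Sum>a\<in>As. \<Sum>y\<in>Ys. \<Sum>z\<in>Zs. g z a y)"
  by (subst sum.swap) (intro sum.cong refl sum.swap)

lemma mutual_info_on_wZA:
  "mutual_info_on Zs As wZA
    = (\<Sum>z\<in>Zs. \<Sum>a\<in>As. \<Sum>y\<in>Ys. f z a y / total_weight * ln (wZA z a * total_weight / (wZ z * wA a)))"
proof -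
  have "mutual_info_on Zs As wZA
      = (\<Sum>z\<in>Zs. \<Sum>a\<in>As. wZA z a / total_weight * ln (wZA z a * total_weight / (wZ z * wA a)))"
    by (rule mutual_info_on_eq_margins) (simp_all add: wZA_def wZ_def wA_def total_weight_def)
  then show ?thesis
    by (simp add: wZA_def flip: sum_distrib_right sum_divide_distrib)
qed

lemma mutual_info_on_wAY:
  "mutual_info_on As Ys wAY
    = (\<Sum>z\<in>Zs. \<Sum>a\<in>As. \<Sum>y\<in>Ys. f z a y / total_weight * ln (wAY a y * total_weight / (wA a * wY y)))"
proof -
  have "mutual_info_on As Ys wAY
      = (\<Sum>a\<in>As. \<Sum>y\<in>Ys. wAY a y / total_weight * ln (wAY a y * total_weight / (wA a * wY y)))"
    by (rule mutual_info_on_eq_margins; unfold wAY_def wA_def wY_def total_weight_def; rule sum.swap)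
  then show ?thesis
    unfolding sum_swap_AYZ by (simp add: wAY_def flip: sum_distrib_right sum_divide_distrib)
qed

lemma sum_mutual_info_on_given_Y:
  "(\<Sum>y\<in>Ys. wY y / total_weight * mutual_info_on As Zs (\<lambda>a z. f z a y))
    = (\<Sum>z\<in>Zs. \<Sum>a\<in>As. \<Sum>y\<in>Ys. f z a y / total_weight * ln (f z a y * wY y / (wAY a y * wZY z y)))"
proof -
  have "wY y / total_weight * mutual_info_on As Zs (\<lambda>a z. f z a y)
      = (\<Sum>a\<in>As. \<Sum>z\<in>Zs. f z a y / total_weight * ln (f z a y * wY y / (wAY a y * wZY z y)))"
    if "y \<in> Ys" for y
  proof (cases "wY y = 0")
    case True
    have "f z a y = 0" if "z \<in> Zs" "a \<in> As" for z a
      using True le_margins(6,7)[OF that \<open>y \<in> Ys\<close>] nonneg[of z a y] by linarith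
    then show ?thesis using True by (simp cong: sum.cong)
  next
    case False
    have "mutual_info_on As Zs (\<lambda>a z. f z a y)
        = (\<Sum>a\<in>As. \<Sum>z\<in>Zs. f z a y / wY y * ln (f z a y * wY y / (wAY a y * wZY z y)))"
      by (rule mutual_info_on_eq_margins; unfold wAY_def wZY_def wY_def; rule refl sum.swap)
    then show ?thesis
      using False by (simp add: sum_distrib_left)
  qed
  then have "(\<Sum>y\<in>Ys. wY y / total_weight * mutual_info_on As Zs (\<lambda>a z. f z a y))
      = (\<Sum>y\<in>Ys. \<Sum>a\<in>As. \<Sum>z\<in>Zs. f z a y / total_weight * ln (f z a y * wY y / (wAY a y * wZY z y)))"
    by (rule sum.cong[OF refl])
  also have "\<dots> = (\<Sum>a\<in>As. \<Sum>y\<in>Ys. \<Sum>z\<in>Zs. f z a y / total_weight * ln (f z a y * wY y / (wAY a y * wZY z y)))"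
    by (rule sum.swap)
  finally show ?thesis by (simp only: sum_swap_AYZ)
qed

lemma sum_remainder_eq_0:
  "(\<Sum>z\<in>Zs. \<Sum>a\<in>As. \<Sum>y\<in>Ys. (wZY z y * wZA z a / wZ z - f z a y) / total_weight) = 0"
proof -
  have "(\<Sum>a\<in>As. \<Sum>y\<in>Ys. wZY z y * wZA z a / wZ z) = wZ z" for z
    by (rule sum_sum_mult_divide_eq) (simp_all add: wZA_def wZY_def wZ_def sum.swap[of _ As])
  then show ?thesis
    by (simp add: total_weight_def wZ_def sum_subtractf flip: sum_divide_distrib)
qed

text \<open>Termwise, the log-ratio of
  \<open>I(Z; A)\<close> splits into those of \<open>I(A; Y)\<close> and \<open>I(A; Z | Y)\<close> plus a remainder, whose bound
  \<open>ln t \<le> t - 1\<close> sums to zero.\<close>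
lemma mutual_info_on_le_chain:
  "mutual_info_on Zs As wZA
    \<le> mutual_info_on As Ys wAY + (\<Sum>y\<in>Ys. wY y / total_weight * mutual_info_on As Zs (\<lambda>a z. f z a y))"
proof -
  have "f z a y / total_weight * ln (wZA z a * total_weight / (wZ z * wA a))
      \<le> f z a y / total_weight * ln (wAY a y * total_weight / (wA a * wY y))
        + f z a y / total_weight * ln (f z a y * wY y / (wAY a y * wZY z y))
        + (wZY z y * wZA z a / wZ z - f z a y) / total_weight"
    if "z \<in> Zs" "a \<in> As" "y \<in> Ys" for z a y
  proof (cases "f z a y = 0")
    case True
    then show ?thesis using margins_nonneg by simp
  next
    case False
    then have "0 < f z a y" using nonneg[of z a y] by simp
    with le_margins[OF that] show ?thesis by (intro mul_ln_ratio_le_split) linarith+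
  qed
  then have "mutual_info_on Zs As wZA
      \<le> mutual_info_on As Ys wAY + (\<Sum>y\<in>Ys. wY y / total_weight * mutual_info_on As Zs (\<lambda>a z. f z a y))
        + (\<Sum>z\<in>Zs. \<Sum>a\<in>As. \<Sum>y\<in>Ys. (wZY z y * wZA z a / wZ z - f z a y) / total_weight)"
    unfolding mutual_info_on_wZA mutual_info_on_wAY sum_mutual_info_on_given_Y sum.distrib[symmetric]
    by (intro sum_mono) auto
  then show ?thesis unfolding sum_remainder_eq_0 by simp
qed

end

lemma sample_sel [simp]: "sS (s, z, a, y) = s" "zZ (s, z, a, y) = z" "aA (s, z, a, y) = a" "yY (s, z, a, y) = y"
  by (simp_all add: sS_def zZ_def aA_def yY_def)

locale finite_sample_model =
  fixes P :: "sample pmf" and N B :: nat and X :: "nat set"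
  assumes finite_actions: "finite X"
    and support: "x \<in> set_pmf P \<Longrightarrow> zZ x \<in> {1..N} \<and> aA x \<in> X \<and> yY x \<in> {1..B}"
begin

lemma set_pmf_map_cond_pmf_subset:
  assumes "measure P E \<noteq> 0"
  shows "set_pmf (map_pmf (\<lambda>x. (aA x, yY x)) (cond_pmf P E)) \<subseteq> X \<times> {1..B}"
    and "set_pmf (map_pmf (\<lambda>x. (aA x, zZ x)) (cond_pmf P E)) \<subseteq> X \<times> {1..N}"
  using assms support by (auto simp: measure_pmf_zero_iff set_cond_pmf)

lemma measure_state:
  "measure P {x. sS x = s} = (\<Sum>z\<in>{1..N}. \<Sum>a\<in>X. \<Sum>y\<in>{1..B}. pmf P (s, z, a, y))"
proof -
  have "measure P {x. sS x = s} = (\<Sum>i\<in>{1..N} \<times> X \<times> {1..B}. pmf P ((\<lambda>(z, a, y). (s, z, a, y)) i))"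
    by (rule measure_pmf_eq_sum_injective)
      (use finite_actions support in \<open>auto simp: inj_on_def image_iff\<close>)
  then show ?thesis by (simp add: sum.cartesian_product')
qed

lemma measure_state_index:
  "measure P {x. sS x = s \<and> zZ x = z} = (\<Sum>a\<in>X. \<Sum>y\<in>{1..B}. pmf P (s, z, a, y))"
proof -
  have "measure P {x. sS x = s \<and> zZ x = z} = (\<Sum>i\<in>X \<times> {1..B}. pmf P ((\<lambda>(a, y). (s, z, a, y)) i))"
    by (rule measure_pmf_eq_sum_injective)
      (use finite_actions support in \<open>auto simp: inj_on_def image_iff\<close>)
  then show ?thesis by (simp add: sum.cartesian_product')
qed

lemma measure_state_index_action:
  "measure P {x. sS x = s \<and> zZ x = z \<and> aA x = a} = (\<Sum>y\<in>{1..B}. pmf P (s, z, a, y))"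
  by (rule measure_pmf_eq_sum_injective[where g = "\<lambda>y. (s, z, a, y)"])
    (use support in \<open>auto simp: inj_on_def image_iff\<close>)

lemma measure_state_action_reward:
  "measure P {x. sS x = s \<and> aA x = a \<and> yY x = y} = (\<Sum>z\<in>{1..N}. pmf P (s, z, a, y))"
  by (rule measure_pmf_eq_sum_injective[where g = "\<lambda>z. (s, z, a, y)"])
    (use support in \<open>auto simp: inj_on_def image_iff\<close>)

lemma JSD_div_eq_mutual_info_on:
  assumes "measure P {x. sS x = s} \<noteq> 0"
  shows "JSD_div P N X s = mutual_info_on {1..N} X (\<lambda>z a. \<Sum>y\<in>{1..B}. pmf P (s, z, a, y))"
proof -
  define g where "g z a = (\<Sum>y\<in>{1..B}. pmf P (s, z, a, y))" for z a
  define h where "h z = (\<Sum>a\<in>X. g z a)" for z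
  define m where "m = measure P {x. sS x = s}"
  have m_eq: "m = (\<Sum>z\<in>{1..N}. h z)" unfolding m_def h_def g_def by (rule measure_state)
  have g_nonneg: "0 \<le> g z a" for z a by (simp add: g_def sum_nonneg)
  have wt: "wt P s z = h z / m" for z
    using assms unfolding wt_def m_def h_def g_def
    by (simp add: pmf_map_cond_pmf measure_state_index)
  have pol: "pol P s z a = g z a / h z" if "h z \<noteq> 0" for z a
    using that unfolding pol_def h_def g_def
    by (simp add: pmf_map_cond_pmf measure_state_index measure_state_index_action conj_assoc)
  \<comment> \<open>If \<open>h z = 0\<close>, \<open>pol P s z\<close> conditions on a null event and is junk, but its weight is 0.\<close>
  have g_zero: "g z a = 0" if "h z = 0" "a \<in> X" for z a
    using that finite_actions g_nonneg by (simp add: h_def sum_nonneg_eq_0_iff)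
  have "wt P s z * pol P s z a = g z a / m" if "a \<in> X" for z a
    using that by (cases "h z = 0") (simp_all add: wt pol g_zero)
  then have mix: "mixpol P N s a = (\<Sum>z\<in>{1..N}. g z a) / m" if "a \<in> X" for a
    using that by (simp add: mixpol_def sum_divide_distrib)
  have "wt P s z * kl_on X (pol P s z) (mixpol P N s)
      = (\<Sum>a\<in>X. g z a / m * ln (g z a * m / (h z * (\<Sum>z\<in>{1..N}. g z a))))" for z
  proof (cases "h z = 0")
    case True
    then show ?thesis by (simp add: wt g_zero)
  next
    case False
    have "h z / m * (g z a / h z * ln (g z a / h z / ((\<Sum>z\<in>{1..N}. g z a) / m)))
        = g z a / m * ln (g z a * m / (h z * (\<Sum>z\<in>{1..N}. g z a)))" for a
      using False by (simp add: divide_divide_times_eq)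
    then show ?thesis
      unfolding kl_on_def wt sum_distrib_left by (intro sum.cong) (simp_all add: pol False mix)
  qed
  then show ?thesis
    unfolding JSD_div_def mutual_info_on_def Let_def
    by (simp add: m_eq h_def g_def)
qed

lemma mutual_info_action_reward_eq_mutual_info_on:
  assumes "measure P {x. sS x = s} \<noteq> 0"
  shows "mutual_info (map_pmf (\<lambda>x. (aA x, yY x)) (cond_pmf P {x. sS x = s}))
    = mutual_info_on X {1..B} (\<lambda>a y. \<Sum>z\<in>{1..N}. pmf P (s, z, a, y))"
proof -
  let ?Q = "map_pmf (\<lambda>x. (aA x, yY x)) (cond_pmf P {x. sS x = s})"
  have "mutual_info ?Q = mutual_info_on X {1..B} (\<lambda>a y. pmf ?Q (a, y))"
    using finite_actions set_pmf_map_cond_pmf_subset(1)[OF assms]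
    by (intro mutual_info_eq_mutual_info_on) auto
  also have "(\<lambda>a y. pmf ?Q (a, y))
      = (\<lambda>a y. (\<Sum>z\<in>{1..N}. pmf P (s, z, a, y)) / measure P {x. sS x = s})"
    using assms by (simp add: pmf_map_cond_pmf measure_state_action_reward conj_assoc)
  finally show ?thesis
    using assms by (simp add: mutual_info_on_divide zero_less_measure_iff)
qed

lemma mutual_info_action_index_eq_mutual_info_on:
  assumes "measure P {x. sS x = s \<and> yY x = y} \<noteq> 0"
  shows "mutual_info (map_pmf (\<lambda>x. (aA x, zZ x)) (cond_pmf P {x. sS x = s \<and> yY x = y}))
    = mutual_info_on X {1..N} (\<lambda>a z. pmf P (s, z, a, y))"
proof -
  let ?Q = "map_pmf (\<lambda>x. (aA x, zZ x)) (cond_pmf P {x. sS x = s \<and> yY x = y})"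
  have "mutual_info ?Q = mutual_info_on X {1..N} (\<lambda>a z. pmf ?Q (a, z))"
    using finite_actions set_pmf_map_cond_pmf_subset(2)[OF assms]
    by (intro mutual_info_eq_mutual_info_on) auto
  also have "(\<lambda>a z. pmf ?Q (a, z))
      = (\<lambda>a z. pmf P (s, z, a, y) / measure P {x. sS x = s \<and> yY x = y})"
  proof (intro ext)
    fix a z
    have "{x. (sS x = s \<and> yY x = y) \<and> (aA x, zZ x) = (a, z)} = {(s, z, a, y)}"
      by (auto simp: sS_def zZ_def aA_def yY_def)
    then show "pmf ?Q (a, z) = pmf P (s, z, a, y) / measure P {x. sS x = s \<and> yY x = y}"
      using assms by (simp add: pmf_map_cond_pmf measure_pmf_single)
  qed
  finally show ?thesis
    using assms by (simp add: mutual_info_on_divide zero_less_measure_iff)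
qed

text \<open>Boundedness matters here: the integral of a non-integrable function is 0 by convention.\<close>
lemma mutual_info_action_index_eq_0:
  assumes "mi_A_Z_given_YS P = 0" and "measure P {x. sS x = s \<and> yY x = y} \<noteq> 0"
  shows "mutual_info (map_pmf (\<lambda>x. (aA x, zZ x)) (cond_pmf P {x. sS x = s \<and> yY x = y})) = 0"
proof -
  let ?M = "map_pmf (\<lambda>x. (sS x, yY x)) P"
  let ?G = "\<lambda>(s, y). mutual_info (map_pmf (\<lambda>x. (aA x, zZ x)) (cond_pmf P {x. sS x = s \<and> yY x = y}))"
  have "0 \<le> ?G (s', y') \<and> ?G (s', y') \<le> card (X \<times> {1..N})" if "(s', y') \<in> set_pmf ?M" for s' y'
  proof -
    have "measure P {x. sS x = s' \<and> yY x = y'} \<noteq> 0"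
      using that by (auto simp: measure_pmf_zero_iff)
    note sub = set_pmf_map_cond_pmf_subset(2)[OF this]
    show ?thesis
      using mutual_info_nonneg[OF finite_subset[OF sub]] mutual_info_le_card[OF _ sub] finite_actions
      by simp
  qed
  moreover have "(s, y) \<in> set_pmf ?M"
    using assms(2) by (auto simp: measure_pmf_zero_iff)
  ultimately have "?G (s, y) = 0"
    using assms(1) unfolding mi_A_Z_given_YS_def
    by (intro expectation_pmf_eq_0_imp_eq_0[where M = ?M and f = ?G and K = "card (X \<times> {1..N})"]) auto
  then show ?thesis by simp
qed

lemma JSD_div_le_mutual_info_action_reward:
  assumes state: "measure P {x. sS x = s} \<noteq> 0"
    and cond_indep: "\<And>y. measure P {x. sS x = s \<and> yY x = y} \<noteq> 0 \<Longrightarrow>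
      mutual_info (map_pmf (\<lambda>x. (aA x, zZ x)) (cond_pmf P {x. sS x = s \<and> yY x = y})) = 0"
  shows "JSD_div P N X s \<le> mutual_info (map_pmf (\<lambda>x. (aA x, yY x)) (cond_pmf P {x. sS x = s}))"
proof -
  interpret W: joint_weights "{1..N}" X "{1..B}" "\<lambda>z a y. pmf P (s, z, a, y)"
    using finite_actions by unfold_locales simp_all
  have cond_term_zero:
    "W.wY y / W.total_weight * mutual_info_on X {1..N} (\<lambda>a z. pmf P (s, z, a, y)) = 0" for y
  proof (cases "W.wY y = 0")
    case False
    then obtain z where "(\<Sum>a\<in>X. pmf P (s, z, a, y)) \<noteq> 0"
      unfolding W.wY_def by (rule sum.not_neutral_contains_not_neutral)
    then obtain a where "pmf P (s, z, a, y) \<noteq> 0"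
      by (rule sum.not_neutral_contains_not_neutral)
    then have "0 < measure P {x. sS x = s \<and> yY x = y}"
      by (intro measure_pmf_posI[of "(s, z, a, y)"]) (simp_all add: set_pmf_eq)
    then show ?thesis
      using cond_indep mutual_info_action_index_eq_mutual_info_on by simp
  qed simp
  then have "(\<Sum>y\<in>{1..B}. W.wY y / W.total_weight * mutual_info_on X {1..N} (\<lambda>a z. pmf P (s, z, a, y))) = 0"
    by (intro sum.neutral ballI)
  then have "mutual_info_on {1..N} X W.wZA \<le> mutual_info_on X {1..B} W.wAY"
    using W.mutual_info_on_le_chain by simp
  moreover have "W.wZA = (\<lambda>z a. \<Sum>y\<in>{1..B}. pmf P (s, z, a, y))"
    and "W.wAY = (\<lambda>a y. \<Sum>z\<in>{1..N}. pmf P (s, z, a, y))"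
    by (intro ext; simp only: W.wZA_def W.wAY_def)+
  ultimately show ?thesis
    by (simp add: JSD_div_eq_mutual_info_on[OF state] mutual_info_action_reward_eq_mutual_info_on[OF state])
qed

lemma DTV_div_le_JSD_div:
  assumes "measure P {x. sS x = s} \<noteq> 0"
  shows "DTV_div P N X s \<le> JSD_div P N X s"
proof -
  have ne: "set_pmf P \<inter> {x. sS x = s} \<noteq> {}" using assms by (simp add: measure_pmf_zero_iff)
  have "sum (wt P s) {1..N} = 1"
    unfolding wt_def using ne support by (intro sum_pmf_eq_1) (auto simp: set_cond_pmf)
  moreover have "sum (pol P s z) X = 1" if "wt P s z \<noteq> 0" for z
  proof -
    have "measure P {x. sS x = s \<and> zZ x = z} \<noteq> 0"
      using that assms by (auto simp: wt_def pmf_map_cond_pmf)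
    then have "set_pmf P \<inter> {x. sS x = s \<and> zZ x = z} \<noteq> {}" by (simp add: measure_pmf_zero_iff)
    then show ?thesis
      unfolding pol_def using support finite_actions by (intro sum_pmf_eq_1) (auto simp: set_cond_pmf)
  qed
  moreover have "0 \<le> wt P s z" "0 \<le> pol P s z a" for z a by (simp_all add: wt_def pol_def)
  ultimately have "wt P s z * (tv_on X (pol P s z) (mixpol P N s))\<^sup>2
      \<le> wt P s z * kl_on X (pol P s z) (mixpol P N s)" if "z \<in> {1..N}" for z
    unfolding mixpol_def using that by (intro mixture_tv_on_sq_le_kl_on) blast+
  then show ?thesis
    unfolding DTV_div_def JSD_div_def by (rule sum_mono)
qed

lemma D2_div_le_four_DTV_div: "D2_div P N X s \<le> 4 * DTV_div P N X s"
proof -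
  have "wt P s z * (\<Sum>a\<in>X. (pol P s z a - mixpol P N s a)\<^sup>2)
      \<le> 4 * (wt P s z * (tv_on X (pol P s z) (mixpol P N s))\<^sup>2)" for z
    using mult_left_mono[OF sum_sq_le_four_tv_on_sq[OF finite_actions], of "wt P s z"]
    by (simp add: wt_def mult.left_commute)
  then have "D2_div P N X s \<le> (\<Sum>z\<in>{1..N}. 4 * (wt P s z * (tv_on X (pol P s z) (mixpol P N s))\<^sup>2))"
    unfolding D2_div_def by (rule sum_mono)
  then show ?thesis by (simp only: DTV_div_def sum_distrib_left)
qed

theorem Expr_divergences_le_mi_A_Y_given_S:
  assumes "mi_A_Z_given_YS P = 0"
  shows "Expr P (JSD_div P N X) \<le> 4 * mi_A_Y_given_S P"
    and "Expr P (D2_div P N X) \<le> 4 * mi_A_Y_given_S P"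
    and "Expr P (DTV_div P N X) \<le> 4 * mi_A_Y_given_S P"
proof -
  define F where "F s = mutual_info (map_pmf (\<lambda>x. (aA x, yY x)) (cond_pmf P {x. sS x = s}))" for s
  define K where "K = 4 * real (card (X \<times> {1..B}))"
  have bounds: "0 \<le> DTV_div P N X s" "DTV_div P N X s \<le> JSD_div P N X s" "JSD_div P N X s \<le> F s"
      "0 \<le> D2_div P N X s" "D2_div P N X s \<le> 4 * DTV_div P N X s" "4 * F s \<le> K"
    if "s \<in> set_pmf (map_pmf sS P)" for s
  proof -
    have state: "measure P {x. sS x = s} \<noteq> 0"
      using that by (auto simp: measure_pmf_zero_iff)
    show "0 \<le> DTV_div P N X s" "0 \<le> D2_div P N X s"
      unfolding DTV_div_def D2_div_def by (auto intro!: sum_nonneg mult_nonneg_nonneg simp: wt_def)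
    show "DTV_div P N X s \<le> JSD_div P N X s" using state by (rule DTV_div_le_JSD_div)
    show "JSD_div P N X s \<le> F s" unfolding F_def
      using state assms by (intro JSD_div_le_mutual_info_action_reward mutual_info_action_index_eq_0)
    show "D2_div P N X s \<le> 4 * DTV_div P N X s" by (rule D2_div_le_four_DTV_div)
    show "4 * F s \<le> K" unfolding F_def K_def
      using mutual_info_le_card[OF _ set_pmf_map_cond_pmf_subset(1)[OF state]] finite_actions by simp
  qed
  have "Expr P D \<le> 4 * mi_A_Y_given_S P"
    if "\<And>s. s \<in> set_pmf (map_pmf sS P) \<Longrightarrow> 0 \<le> D s \<and> D s \<le> 4 * F s" for D
  proof -
    have "Expr P D \<le> Expr P (\<lambda>s. 4 * F s)"
      unfolding Expr_def using that bounds(6) by (intro expectation_pmf_mono_bounded[where K = K]) blast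
    also have "\<dots> = 4 * mi_A_Y_given_S P"
      unfolding Expr_def mi_A_Y_given_S_def F_def by (rule integral_mult_right_zero)
    finally show ?thesis .
  qed
  moreover have "0 \<le> D s \<and> D s \<le> 4 * F s"
    if "s \<in> set_pmf (map_pmf sS P)" and "D \<in> {JSD_div P N X, D2_div P N X, DTV_div P N X}" for D s
    using bounds[OF that(1)] that(2) by auto
  ultimately show "Expr P (JSD_div P N X) \<le> 4 * mi_A_Y_given_S P"
    and "Expr P (D2_div P N X) \<le> 4 * mi_A_Y_given_S P"
    and "Expr P (DTV_div P N X) \<le> 4 * mi_A_Y_given_S P"
    by auto
qed

end

theorem theorem4:
  "\<exists>C::real. \<forall>(P::sample pmf) (N::nat) (B::nat) (X::nat set).
     finite X \<and>
     (\<forall>x\<in>set_pmf P. zZ x \<in> {1..N} \<and> aA x \<in> X \<and> yY x \<in> {1..B}) \<and>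
     mi_A_Z_given_YS P = 0
     \<longrightarrow> Expr P (JSD_div P N X) \<le> C * mi_A_Y_given_S P
       \<and> Expr P (D2_div P N X) \<le> C * mi_A_Y_given_S P
       \<and> Expr P (DTV_div P N X) \<le> C * mi_A_Y_given_S P"
proof (intro exI[of _ 4] allI impI, elim conjE)
  fix P :: "sample pmf" and N B :: nat and X :: "nat set"
  assume "finite X" "\<forall>x\<in>set_pmf P. zZ x \<in> {1..N} \<and> aA x \<in> X \<and> yY x \<in> {1..B}"
    and "mi_A_Z_given_YS P = 0"
  then interpret finite_sample_model P N B X by unfold_locales blast+
  show "Expr P (JSD_div P N X) \<le> 4 * mi_A_Y_given_S P \<and>
      Expr P (D2_div P N X) \<le> 4 * mi_A_Y_given_S P \<and>
      Expr P (DTV_div P N X) \<le> 4 * mi_A_Y_given_S P"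
    using Expr_divergences_le_mi_A_Y_given_S \<open>mi_A_Z_given_YS P = 0\<close> by blast
qed

end
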